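(* Let $a>b>0$ and let $E$ be the ellipse $\frac{x^2}{a^2}+\frac{y^2}{b^2}=1$. Put $\delta=\sqrt{a^4-a^2b^2+b^4}$. Then for every 3-periodic billiard orbit (triangle) $P_1P_2P_3$ in $E$, the ratio of its inradius $r$ to its circumradius $R$ is the same, namely \[ \frac{r}{R}=\frac{2(\delta-b^2)(a^2-\delta)}{(a^2-b^2)^2}. \]
   Context: A 3-periodic billiard orbit in the ellipse $E$ is a nondegenerate triangle $P_1P_2P_3$ with all vertices on $E$ such that at each vertex $P_i$ the normal line to $E$ at $P_i$ bisects the interior angle of the triangle at $P_i$ (equal angles of incidence and reflection). These orbits form a one-parameter family (one through every point of $E$). The inradius and circumradius are the radii of the incircle and circumcircle of the triangle. *)

theory Defs
  imports "HOL-Analysis.Analysis"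
begin

type_synonym pt = "real \<times> real"

definition on_ellipse :: "real \<Rightarrow> real \<Rightarrow> pt \<Rightarrow> bool" where
  "on_ellipse a b P \<longleftrightarrow> (fst P)^2 / a^2 + (snd P)^2 / b^2 = 1"

text \<open>Normal vector to the ellipse at P (gradient of the defining function, up to factor 2).\<close>
definition ellipse_normal :: "real \<Rightarrow> real \<Rightarrow> pt \<Rightarrow> pt" where
  "ellipse_normal a b P = (fst P / a^2, snd P / b^2)"

definition nondegenerate_triangle :: "pt \<Rightarrow> pt \<Rightarrow> pt \<Rightarrow> bool" where
  "nondegenerate_triangle P Q R \<longleftrightarrow> \<not> collinear {P, Q, R}"

text \<open>The normal line at P bisects the interior angle QPR: the interior bisector direction
  (sum of unit vectors from P towards Q and R) is parallel to the normal.\<close>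
definition normal_bisects :: "real \<Rightarrow> real \<Rightarrow> pt \<Rightarrow> pt \<Rightarrow> pt \<Rightarrow> bool" where
  "normal_bisects a b P Q R \<longleftrightarrow>
     (\<exists>t. (Q - P) /\<^sub>R norm (Q - P) + (R - P) /\<^sub>R norm (R - P) = t *\<^sub>R ellipse_normal a b P)"

definition billiard3 :: "real \<Rightarrow> real \<Rightarrow> pt \<Rightarrow> pt \<Rightarrow> pt \<Rightarrow> bool" where
  "billiard3 a b P1 P2 P3 \<longleftrightarrow>
     nondegenerate_triangle P1 P2 P3 \<and>
     on_ellipse a b P1 \<and> on_ellipse a b P2 \<and> on_ellipse a b P3 \<and>
     normal_bisects a b P1 P2 P3 \<and> normal_bisects a b P2 P3 P1 \<and> normal_bisects a b P3 P1 P2"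

definition tri_area :: "pt \<Rightarrow> pt \<Rightarrow> pt \<Rightarrow> real" where
  "tri_area P Q R = \<bar>(fst Q - fst P) * (snd R - snd P) - (fst R - fst P) * (snd Q - snd P)\<bar> / 2"

definition inradius :: "pt \<Rightarrow> pt \<Rightarrow> pt \<Rightarrow> real" where
  "inradius P Q R = 2 * tri_area P Q R / (dist P Q + dist Q R + dist R P)"

definition circumradius :: "pt \<Rightarrow> pt \<Rightarrow> pt \<Rightarrow> real" where
  "circumradius P Q R = dist P Q * dist Q R * dist R P / (4 * tri_area P Q R)"

end

theory Submission
  imports Defs
begin

text \<open>
  By Carnot's theorem, \<open>r / R = cos A + cos B + cos C - 1\<close>. At a vertex \<open>P\<close> with normal
  \<open>n\<close> both sides make the same angle with \<open>n\<close>, so the cosine of the vertex angle is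
  \<open>2 J\<^sup>2 / |n|\<^sup>2 - 1\<close>, where \<open>J = \<langle>Q - P, n\<rangle> / |PQ|\<close>. On the ellipse
  \<open>\<langle>Q - P, n\<^sub>P\<rangle> = \<langle>P - Q, n\<^sub>Q\<rangle>\<close>, so \<open>J\<close> (the Joachimsthal integral) is the
  same for all three sides. Writing \<open>P\<^sub>i = (a c\<^sub>i, b z\<^sub>i)\<close> with
  \<open>c\<^sub>i\<^sup>2 + z\<^sub>i\<^sup>2 = 1\<close>, each side becomes a bilinear relation between its endpoints.
  Eliminating the points from the three relations fixes \<open>J\<close> (Cayley's closure condition), and
  the vanishing Gram determinant of three plane vectors expresses \<open>\<Sum> 1 / |n\<^sub>i|\<^sup>2\<close>
  through \<open>J\<close> alone; the ratio comes out as \<open>J\<^sup>2 (a\<^sup>2 + b\<^sup>2) - 1\<close>.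
\<close>

lemma tri_area_heron:
  fixes P Q R :: pt
  defines "p \<equiv> dist P Q" and "q \<equiv> dist Q R" and "w \<equiv> dist R P"
  shows "16 * tri_area P Q R ^ 2 = (p + q + w) * (- p + q + w) * (p - q + w) * (p + q - w)"
proof -
  obtain x1 y1 x2 y2 x3 y3 where P: "P = (x1, y1)" and Q: "Q = (x2, y2)" and R: "R = (x3, y3)"
    by (cases P, cases Q, cases R)
  have p: "p\<^sup>2 = (x2 - x1)\<^sup>2 + (y2 - y1)\<^sup>2" and q: "q\<^sup>2 = (x3 - x2)\<^sup>2 + (y3 - y2)\<^sup>2"
    and w: "w\<^sup>2 = (x1 - x3)\<^sup>2 + (y1 - y3)\<^sup>2"
    unfolding p_def q_def w_def P Q R by (simp_all add: dist_Pair_Pair dist_real_def power2_commute)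
  have "16 * tri_area P Q R ^ 2 = 4 * ((x2 - x1) * (y3 - y1) - (x3 - x1) * (y2 - y1))\<^sup>2"
    unfolding tri_area_def P Q R by (simp add: power_divide)
  also have "\<dots> = 2 * p\<^sup>2 * q\<^sup>2 + 2 * q\<^sup>2 * w\<^sup>2 + 2 * w\<^sup>2 * p\<^sup>2 - (p\<^sup>2)\<^sup>2 - (q\<^sup>2)\<^sup>2 - (w\<^sup>2)\<^sup>2"
    unfolding p q w by algebra
  also have "\<dots> = (p + q + w) * (- p + q + w) * (p - q + w) * (p + q - w)"
    by algebra
  finally show ?thesis .
qed

definition cos_angle :: "'a::real_inner \<Rightarrow> 'a \<Rightarrow> 'a \<Rightarrow> real" where
  "cos_angle P Q R = inner (Q - P) (R - P) / (dist P Q * dist P R)"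

lemma cos_angle_law:
  "cos_angle P Q R = ((dist P Q)\<^sup>2 + (dist P R)\<^sup>2 - (dist Q R)\<^sup>2) / (2 * dist P Q * dist P R)"
  unfolding cos_angle_def dot_norm_neg[of "Q - P"] by (simp add: dist_norm norm_minus_commute)

lemma inradius_div_circumradius:
  assumes "\<not> collinear {P, Q, R}"
  shows "inradius P Q R / circumradius P Q R
    = cos_angle P Q R + cos_angle Q R P + cos_angle R P Q - 1"
proof -
  define p q w where "p = dist P Q" and "q = dist Q R" and "w = dist R P"
  have "P \<noteq> Q" "Q \<noteq> R" "R \<noteq> P" using assms by (auto simp: insert_commute)
  then have pos: "p > 0" "q > 0" "w > 0" unfolding p_def q_def w_def by auto
  define S where "S = tri_area P Q R"
  have heron: "16 * S\<^sup>2 = (p + q + w) * (- p + q + w) * (p - q + w) * (p + q - w)"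
    unfolding S_def p_def q_def w_def by (rule tri_area_heron)
  have "inradius P Q R / circumradius P Q R = 16 * S\<^sup>2 / 2 / ((p + q + w) * (p * q * w))"
    unfolding inradius_def circumradius_def S_def[symmetric] p_def[symmetric] q_def[symmetric]
      w_def[symmetric]
    by (simp add: power2_eq_square)
  also have "\<dots> = (- p + q + w) * (p - q + w) * (p + q - w) / (2 * (p * q * w))"
    unfolding heron using pos by simp
  also have "\<dots> = (p\<^sup>2 + w\<^sup>2 - q\<^sup>2) / (2 * p * w) + (q\<^sup>2 + p\<^sup>2 - w\<^sup>2) / (2 * q * p)
      + (w\<^sup>2 + q\<^sup>2 - p\<^sup>2) / (2 * w * q) - 1"
    using pos by (simp add: field_simps) algebra
  also have "\<dots> = cos_angle P Q R + cos_angle Q R P + cos_angle R P Q - 1"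
    unfolding cos_angle_law p_def q_def w_def by (simp add: dist_commute)
  finally show ?thesis .
qed

lemma inner_bisector_unit_vectors:
  fixes u w n :: "'a::real_inner"
  assumes u: "norm u = 1" and w: "norm w = 1" and "u + w \<noteq> 0" and t: "u + w = t *\<^sub>R n"
  shows "inner u n = inner w n"
    and "inner u w = 2 * (inner u n)\<^sup>2 / (norm n)\<^sup>2 - 1"
proof -
  have "t \<noteq> 0" and "n \<noteq> 0" using \<open>u + w \<noteq> 0\<close> t by auto
  have uu: "inner u u = 1" and ww: "inner w w = 1" using u w by (simp_all add: norm_eq_1)
  have u_sum: "1 + inner u w = t * inner u n"
    using arg_cong[OF t, of "inner u"] uu by (simp add: inner_add_right)
  moreover have "1 + inner u w = t * inner w n"
    using arg_cong[OF t, of "inner w"] ww by (simp add: inner_add_right inner_commute)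
  ultimately show "inner u n = inner w n" using \<open>t \<noteq> 0\<close> by simp
  have "t * (t * (norm n)\<^sup>2) = (norm (u + w))\<^sup>2"
    using t by (simp add: power2_eq_square)
  also have "\<dots> = 2 * (1 + inner u w)"
    using uu ww by (simp add: power2_norm_eq_inner inner_add_left inner_add_right inner_commute)
  also have "\<dots> = t * (2 * inner u n)"
    using u_sum by simp
  finally have "t * (norm n)\<^sup>2 = 2 * inner u n"
    using \<open>t \<noteq> 0\<close> by simp
  then have "t = 2 * inner u n / (norm n)\<^sup>2"
    using \<open>t \<noteq> 0\<close> \<open>n \<noteq> 0\<close> by (simp add: field_simps)
  then show "inner u w = 2 * (inner u n)\<^sup>2 / (norm n)\<^sup>2 - 1"
    using u_sum by (simp add: power2_eq_square)
qed

lemma normal_bisects_cos_angle: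
  assumes "normal_bisects a b P Q R" and "\<not> collinear {P, Q, R}"
  defines "N \<equiv> ellipse_normal a b P"
  shows "inner (Q - P) N / dist P Q = inner (R - P) N / dist P R"
    and "cos_angle P Q R = 2 * (inner (Q - P) N / dist P Q)\<^sup>2 / (norm N)\<^sup>2 - 1"
proof -
  define u w where "u = (Q - P) /\<^sub>R dist P Q" and "w = (R - P) /\<^sub>R dist P R"
  have "P \<noteq> Q" "P \<noteq> R" using assms(2) by (auto simp: insert_commute)
  then have norms: "norm u = 1" "norm w = 1"
    unfolding u_def w_def by (simp_all add: dist_norm norm_minus_commute)
  have "u + w \<noteq> 0"
  proof
    assume "u + w = 0"
    have "R - P = dist P R *\<^sub>R w"
      using \<open>P \<noteq> R\<close> unfolding w_def by simp
    also have "w = - u"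
      using \<open>u + w = 0\<close> by (simp add: add_eq_0_iff)
    finally have "R - P = (- dist P R / dist P Q) *\<^sub>R (Q - P)"
      unfolding u_def by (simp add: divide_inverse_commute)
    then have "collinear {0, Q - P, R - P}" unfolding collinear_lemma by blast
    then show False
      using assms(2) collinear_3[of Q P R] by (simp add: insert_commute)
  qed
  moreover obtain t where "u + w = t *\<^sub>R N"
    using assms(1) unfolding normal_bisects_def N_def u_def w_def
    by (auto simp: dist_norm norm_minus_commute)
  ultimately have bisector: "inner u N = inner w N" "inner u w = 2 * (inner u N)\<^sup>2 / (norm N)\<^sup>2 - 1"
    using inner_bisector_unit_vectors[OF norms] by blast+
  have "inner u N = inner (Q - P) N / dist P Q" "inner w N = inner (R - P) N / dist P R"
    unfolding u_def w_def by (simp_all add: divide_inverse_commute)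
  moreover have "inner u w = cos_angle P Q R"
    unfolding u_def w_def cos_angle_def by (simp add: divide_inverse_commute)
  ultimately show "inner (Q - P) N / dist P Q = inner (R - P) N / dist P R"
    and "cos_angle P Q R = 2 * (inner (Q - P) N / dist P Q)\<^sup>2 / (norm N)\<^sup>2 - 1"
    using bisector by metis+
qed

lemma inner_ellipse_normal_commute:
  "inner Q (ellipse_normal a b P) = inner P (ellipse_normal a b Q)"
  by (simp add: ellipse_normal_def inner_prod_def mult.commute)

lemma on_ellipse_iff_inner_normal:
  "on_ellipse a b P \<longleftrightarrow> inner P (ellipse_normal a b P) = 1"
  by (simp add: on_ellipse_def ellipse_normal_def inner_prod_def power2_eq_square)

definition joachimsthal :: "real \<Rightarrow> real \<Rightarrow> pt \<Rightarrow> pt \<Rightarrow> real" where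
  "joachimsthal a b P Q = inner (Q - P) (ellipse_normal a b P) / dist P Q"

lemma joachimsthal_mult_dist:
  assumes "on_ellipse a b P" and "P \<noteq> Q"
  shows "joachimsthal a b P Q * dist P Q = inner Q (ellipse_normal a b P) - 1"
  using assms by (simp add: joachimsthal_def on_ellipse_iff_inner_normal inner_diff_left)

lemma joachimsthal_commute:
  assumes "on_ellipse a b P" and "on_ellipse a b Q"
  shows "joachimsthal a b P Q = joachimsthal a b Q P"
proof -
  have "inner (Q - P) (ellipse_normal a b P) = inner (P - Q) (ellipse_normal a b Q)"
    using assms inner_ellipse_normal_commute[of Q a b P]
    by (simp add: on_ellipse_iff_inner_normal inner_diff_left)
  then show ?thesis unfolding joachimsthal_def by (simp add: dist_commute)
qed

lemma billiard3_joachimsthal: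
  assumes "billiard3 a b P1 P2 P3"
  shows "joachimsthal a b P1 P3 = joachimsthal a b P1 P2"
    and "joachimsthal a b P2 P3 = joachimsthal a b P1 P2"
proof -
  have "\<not> collinear {P1, P2, P3}" "\<not> collinear {P2, P3, P1}"
    using assms by (simp_all add: billiard3_def nondegenerate_triangle_def insert_commute)
  moreover have "normal_bisects a b P1 P2 P3" "normal_bisects a b P2 P3 P1"
    and "on_ellipse a b P1" "on_ellipse a b P2"
    using assms by (simp_all add: billiard3_def)
  ultimately show "joachimsthal a b P1 P3 = joachimsthal a b P1 P2"
    and "joachimsthal a b P2 P3 = joachimsthal a b P1 P2"
    using normal_bisects_cos_angle(1)[folded joachimsthal_def] joachimsthal_commute[of a b P1 P2]
    by simp_all
qed

lemma billiard3_cos_angle: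
  assumes "billiard3 a b P1 P2 P3"
  defines "J \<equiv> joachimsthal a b P1 P2"
  shows "cos_angle P1 P2 P3 = 2 * J\<^sup>2 / (norm (ellipse_normal a b P1))\<^sup>2 - 1"
    and "cos_angle P2 P3 P1 = 2 * J\<^sup>2 / (norm (ellipse_normal a b P2))\<^sup>2 - 1"
    and "cos_angle P3 P1 P2 = 2 * J\<^sup>2 / (norm (ellipse_normal a b P3))\<^sup>2 - 1"
proof -
  have "\<not> collinear {P1, P2, P3}" "\<not> collinear {P2, P3, P1}" "\<not> collinear {P3, P1, P2}"
    using assms by (simp_all add: billiard3_def nondegenerate_triangle_def insert_commute)
  moreover have "normal_bisects a b P1 P2 P3" "normal_bisects a b P2 P3 P1"
    "normal_bisects a b P3 P1 P2"
    using assms by (simp_all add: billiard3_def)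
  moreover have "joachimsthal a b P3 P1 = J" "joachimsthal a b P2 P3 = J"
    using assms joachimsthal_commute[of a b P3 P1] billiard3_joachimsthal
    by (simp_all add: billiard3_def J_def)
  ultimately show "cos_angle P1 P2 P3 = 2 * J\<^sup>2 / (norm (ellipse_normal a b P1))\<^sup>2 - 1"
    and "cos_angle P2 P3 P1 = 2 * J\<^sup>2 / (norm (ellipse_normal a b P2))\<^sup>2 - 1"
    and "cos_angle P3 P1 P2 = 2 * J\<^sup>2 / (norm (ellipse_normal a b P3))\<^sup>2 - 1"
    using normal_bisects_cos_angle(2)[folded joachimsthal_def] unfolding J_def by simp_all
qed

lemma unit_circle_chord_relation:
  fixes A B j c1 z1 c2 z2 :: real
  assumes v1: "c1\<^sup>2 + z1\<^sup>2 = 1" and v2: "c2\<^sup>2 + z2\<^sup>2 = 1" and "(c1, z1) \<noteq> (c2, z2)"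
    and chord: "j * (A * (c1 - c2)\<^sup>2 + B * (z1 - z2)\<^sup>2) = (c1 * c2 + z1 * z2 - 1)\<^sup>2"
  shows "(j * (A - B) - 1) * c1 * c2 - (j * (A - B) + 1) * z1 * z2 = j * (A + B) - 1"
proof -
  have "c1 * c2 + z1 * z2 - 1 \<noteq> 0"
  proof
    assume "c1 * c2 + z1 * z2 - 1 = 0"
    then have "(c1 - c2)\<^sup>2 + (z1 - z2)\<^sup>2 = 0" using v1 v2 by algebra
    then show False using \<open>(c1, z1) \<noteq> (c2, z2)\<close> by simp
  qed
  moreover have "A * (c1 - c2)\<^sup>2 + B * (z1 - z2)\<^sup>2
      = (1 - c1 * c2 - z1 * z2) * ((A + B) - (A - B) * (c1 * c2 - z1 * z2))"
    using v1 v2 by algebra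
  ultimately have "j * ((A + B) - (A - B) * (c1 * c2 - z1 * z2)) + (c1 * c2 + z1 * z2 - 1) = 0"
    using chord by (simp add: power2_eq_square) algebra
  then show ?thesis by algebra
qed

lemma unit_circle_triangle_closure:
  fixes k g c1 z1 c2 z2 c3 z3 :: real
  assumes "c1\<^sup>2 + z1\<^sup>2 = 1" "c2\<^sup>2 + z2\<^sup>2 = 1" "c3\<^sup>2 + z3\<^sup>2 = 1"
    and "(c1, z1) \<noteq> (c2, z2)" "(c1, z1) \<noteq> (c3, z3)" "(c2, z2) \<noteq> (c3, z3)"
    and "(k - 1) * c1 * c2 - (k + 1) * z1 * z2 = g"
    and "(k - 1) * c1 * c3 - (k + 1) * z1 * z3 = g"
    and "(k - 1) * c2 * c3 - (k + 1) * z2 * z3 = g"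
  shows "k\<^sup>2 + 2 * g = 1"
proof -
  have "(c1 - c2)\<^sup>2 + (z1 - z2)\<^sup>2 \<noteq> 0" "(c1 - c3)\<^sup>2 + (z1 - z3)\<^sup>2 \<noteq> 0"
    "(c2 - c3)\<^sup>2 + (z2 - z3)\<^sup>2 \<noteq> 0"
    using assms(4-6) by auto
  with assms(1-3,7-9) show ?thesis by algebra
qed

lemma plane_gram_det:
  fixes \<alpha> \<beta> g c1 z1 c2 z2 c3 z3 :: real
  assumes "\<alpha> * c1 * c2 + \<beta> * z1 * z2 = g" "\<alpha> * c1 * c3 + \<beta> * z1 * z3 = g"
    "\<alpha> * c2 * c3 + \<beta> * z2 * z3 = g"
  defines "d1 \<equiv> \<alpha> * c1\<^sup>2 + \<beta> * z1\<^sup>2 - g" and "d2 \<equiv> \<alpha> * c2\<^sup>2 + \<beta> * z2\<^sup>2 - g"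
    and "d3 \<equiv> \<alpha> * c3\<^sup>2 + \<beta> * z3\<^sup>2 - g"
  shows "d1 * d2 * d3 + g * (d1 * d2 + d1 * d3 + d2 * d3) = 0"
proof -
  define G where "G = (\<lambda>c z c' z'. \<alpha> * c * c' + \<beta> * z * z')"
  have det: "G c1 z1 c1 z1 * G c2 z2 c2 z2 * G c3 z3 c3 z3
      + 2 * G c1 z1 c2 z2 * G c1 z1 c3 z3 * G c2 z2 c3 z3 - G c1 z1 c1 z1 * (G c2 z2 c3 z3)\<^sup>2
      - G c2 z2 c2 z2 * (G c1 z1 c3 z3)\<^sup>2 - G c3 z3 c3 z3 * (G c1 z1 c2 z2)\<^sup>2 = 0"
    unfolding G_def by algebra
  have off_diag: "G c1 z1 c2 z2 = g" "G c1 z1 c3 z3 = g" "G c2 z2 c3 z3 = g"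
    using assms(1-3) unfolding G_def by simp_all
  have diag: "G c z c z = \<alpha> * c\<^sup>2 + \<beta> * z\<^sup>2" for c z
    unfolding G_def by (simp add: power2_eq_square)
  show ?thesis using det unfolding off_diag diag d1_def d2_def d3_def by algebra
qed

lemma unit_circle_gram_relation:
  fixes A B j c1 z1 c2 z2 c3 z3 :: real
  defines "k \<equiv> j * (A - B)" and "g \<equiv> j * (A + B) - 1"
    and "M1 \<equiv> B * c1\<^sup>2 + A * z1\<^sup>2" and "M2 \<equiv> B * c2\<^sup>2 + A * z2\<^sup>2" and "M3 \<equiv> B * c3\<^sup>2 + A * z3\<^sup>2"
  assumes "j \<noteq> 0"
    and unit: "c1\<^sup>2 + z1\<^sup>2 = 1" "c2\<^sup>2 + z2\<^sup>2 = 1" "c3\<^sup>2 + z3\<^sup>2 = 1"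
    and rel: "(k - 1) * c1 * c2 - (k + 1) * z1 * z2 = g"
      "(k - 1) * c1 * c3 - (k + 1) * z1 * z3 = g"
      "(k - 1) * c2 * c3 - (k + 1) * z2 * z3 = g"
  shows "g * (M1 * M2 + M1 * M3 + M2 * M3) = 2 * j * (M1 * M2 * M3)"
proof -
  have rel': "(k - 1) * c1 * c2 + - (k + 1) * z1 * z2 = g"
      "(k - 1) * c1 * c3 + - (k + 1) * z1 * z3 = g" "(k - 1) * c2 * c3 + - (k + 1) * z2 * z3 = g"
    using rel by (simp_all add: algebra_simps)
  have "(k - 1) * c1\<^sup>2 + - (k + 1) * z1\<^sup>2 - g = -2 * j * M1"
    "(k - 1) * c2\<^sup>2 + - (k + 1) * z2\<^sup>2 - g = -2 * j * M2"
    "(k - 1) * c3\<^sup>2 + - (k + 1) * z3\<^sup>2 - g = -2 * j * M3"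
    using unit unfolding k_def g_def M1_def M2_def M3_def by algebra+
  from plane_gram_det[OF rel', unfolded this]
  have "(2 * j)\<^sup>2 * (g * (M1 * M2 + M1 * M3 + M2 * M3) - 2 * j * (M1 * M2 * M3)) = 0"
    by algebra
  then show ?thesis using \<open>j \<noteq> 0\<close> by simp
qed

lemma unit_circle_cos_sum:
  fixes A B j c1 z1 c2 z2 c3 z3 :: real
  defines "k \<equiv> j * (A - B)" and "g \<equiv> j * (A + B) - 1"
  assumes "A > B" "B > 0"
    and unit: "c1\<^sup>2 + z1\<^sup>2 = 1" "c2\<^sup>2 + z2\<^sup>2 = 1" "c3\<^sup>2 + z3\<^sup>2 = 1"
    and rel: "(k - 1) * c1 * c2 - (k + 1) * z1 * z2 = g"
      "(k - 1) * c1 * c3 - (k + 1) * z1 * z3 = g"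
      "(k - 1) * c2 * c3 - (k + 1) * z2 * z3 = g"
    and closure: "k\<^sup>2 + 2 * g = 1"
  shows "(2 * j / (c1\<^sup>2 / A + z1\<^sup>2 / B) - 1) + (2 * j / (c2\<^sup>2 / A + z2\<^sup>2 / B) - 1)
      + (2 * j / (c3\<^sup>2 / A + z3\<^sup>2 / B) - 1) - 1 = g"
proof -
  define M where "M = (\<lambda>c z. B * c\<^sup>2 + A * z\<^sup>2)"
  have M_pos: "M c z > 0" if "c\<^sup>2 + z\<^sup>2 = 1" for c z
  proof -
    have "B = B * c\<^sup>2 + B * z\<^sup>2" using that by algebra
    also have "\<dots> \<le> M c z" unfolding M_def using \<open>A > B\<close> by (simp add: mult_right_mono)
    finally show ?thesis using \<open>B > 0\<close> by simp
  qed
  have "j \<noteq> 0" using closure unfolding k_def g_def by auto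
  have gram: "g * (M c1 z1 * M c2 z2 + M c1 z1 * M c3 z3 + M c2 z2 * M c3 z3)
      = 2 * j * (M c1 z1 * M c2 z2 * M c3 z3)"
    using unit_circle_gram_relation[OF \<open>j \<noteq> 0\<close> unit rel[unfolded k_def g_def]]
    unfolding M_def g_def .
  have "g \<noteq> 0" using gram \<open>j \<noteq> 0\<close> M_pos[OF unit(1)] M_pos[OF unit(2)] M_pos[OF unit(3)] by auto
  have sum: "1 / M c1 z1 + 1 / M c2 z2 + 1 / M c3 z3 = 2 * j / g"
    using gram \<open>g \<noteq> 0\<close> M_pos[OF unit(1)] M_pos[OF unit(2)] M_pos[OF unit(3)]
    by (simp add: field_simps)
  have conv: "2 * j / (c\<^sup>2 / A + z\<^sup>2 / B) = 2 * j * A * B / M c z" for c z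
    using \<open>A > B\<close> \<open>B > 0\<close> unfolding M_def by (simp add: field_simps)
  have "(2 * j / (c1\<^sup>2 / A + z1\<^sup>2 / B) - 1) + (2 * j / (c2\<^sup>2 / A + z2\<^sup>2 / B) - 1)
      + (2 * j / (c3\<^sup>2 / A + z3\<^sup>2 / B) - 1) - 1
      = 2 * j * A * B * (1 / M c1 z1 + 1 / M c2 z2 + 1 / M c3 z3) - 4"
    unfolding conv by (simp add: algebra_simps)
  also have "\<dots> = 4 * j\<^sup>2 * A * B / g - 4"
    unfolding sum by (simp add: power2_eq_square)
  also have "4 * j\<^sup>2 * A * B = g\<^sup>2 + 4 * g"
    using closure unfolding k_def g_def by algebra
  also have "(g\<^sup>2 + 4 * g) / g - 4 = g"
    using \<open>g \<noteq> 0\<close> by (simp add: field_simps power2_eq_square)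
  finally show ?thesis .
qed

lemma closure_condition_ratio:
  fixes A B j :: real
  assumes "A > B" "B > 0" "j \<ge> 0"
    and closure: "(j * (A - B))\<^sup>2 + 2 * (j * (A + B) - 1) = 1"
  shows "j * (A + B) - 1
    = 2 * (sqrt (A\<^sup>2 - A * B + B\<^sup>2) - B) * (A - sqrt (A\<^sup>2 - A * B + B\<^sup>2)) / (A - B)\<^sup>2"
proof -
  define \<delta> where "\<delta> = sqrt (A\<^sup>2 - A * B + B\<^sup>2)"
  have "A\<^sup>2 - A * B + B\<^sup>2 \<ge> 0" using assms(1,2) by (simp add: power2_eq_square)
  then have \<delta>2: "\<delta>\<^sup>2 = A\<^sup>2 - A * B + B\<^sup>2" and "\<delta> \<ge> 0" unfolding \<delta>_def by simp_all
  have "((A - B)\<^sup>2 * j + (A + B) - 2 * \<delta>) * ((A - B)\<^sup>2 * j + (A + B) + 2 * \<delta>) = 0"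
    using closure \<delta>2 by algebra
  moreover have "(A - B)\<^sup>2 * j + (A + B) + 2 * \<delta> > 0"
    using assms(1-3) \<open>\<delta> \<ge> 0\<close> by (simp add: add_nonneg_pos add_pos_nonneg)
  ultimately have "(A - B)\<^sup>2 * j + (A + B) - 2 * \<delta> = 0"
    by simp
  then have "(A - B)\<^sup>2 * j = 2 * \<delta> - (A + B)"
    by simp
  moreover have "(A - B)\<^sup>2 > 0" using assms(1) by simp
  ultimately have "j = (2 * \<delta> - (A + B)) / (A - B)\<^sup>2"
    by (simp add: field_simps)
  then show ?thesis
    unfolding \<delta>_def[symmetric] using assms(1) \<delta>2 by (simp add: field_simps) algebra
qed

lemma on_ellipse_circle_coordsE:
  assumes "a \<noteq> 0" "b \<noteq> 0" "on_ellipse a b P"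
  obtains c z where "P = (a * c, b * z)" and "c\<^sup>2 + z\<^sup>2 = 1"
proof
  show "P = (a * (fst P / a), b * (snd P / b))" using assms(1,2) by simp
  show "(fst P / a)\<^sup>2 + (snd P / b)\<^sup>2 = 1" using assms(3) by (simp add: on_ellipse_def power_divide)
qed

lemma ellipse_circle_coords:
  fixes a b c z c' z' :: real
  assumes "a \<noteq> 0" "b \<noteq> 0"
  shows "inner (a * c', b * z') (ellipse_normal a b (a * c, b * z)) = c * c' + z * z'"
    and "(norm (ellipse_normal a b (a * c, b * z)))\<^sup>2 = c\<^sup>2 / a\<^sup>2 + z\<^sup>2 / b\<^sup>2"
    and "(dist (a * c, b * z) (a * c', b * z'))\<^sup>2 = a\<^sup>2 * (c - c')\<^sup>2 + b\<^sup>2 * (z - z')\<^sup>2"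
  using assms unfolding dist_norm power2_norm_eq_inner
  by (simp_all add: ellipse_normal_def inner_prod_def power2_eq_square field_simps)

lemma ellipse_triangle_cos_sum:
  fixes a b j :: real and P1 P2 P3 :: pt
  defines "N \<equiv> ellipse_normal a b"
  assumes "a > b" "b > 0" "j \<ge> 0"
    and on: "on_ellipse a b P1" "on_ellipse a b P2" "on_ellipse a b P3"
    and distinct: "P1 \<noteq> P2" "P1 \<noteq> P3" "P2 \<noteq> P3"
    and chord: "j * (dist P1 P2)\<^sup>2 = (inner P2 (N P1) - 1)\<^sup>2"
      "j * (dist P1 P3)\<^sup>2 = (inner P3 (N P1) - 1)\<^sup>2"
      "j * (dist P2 P3)\<^sup>2 = (inner P3 (N P2) - 1)\<^sup>2"
  shows "(2 * j / (norm (N P1))\<^sup>2 - 1) + (2 * j / (norm (N P2))\<^sup>2 - 1)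
      + (2 * j / (norm (N P3))\<^sup>2 - 1) - 1
    = 2 * (sqrt (a^4 - a^2*b^2 + b^4) - b^2) * (a^2 - sqrt (a^4 - a^2*b^2 + b^4)) / (a^2 - b^2)^2"
proof -
  have "a \<noteq> 0" "b \<noteq> 0" using assms(2,3) by auto
  note coords = ellipse_circle_coords[OF this, folded N_def]
  obtain c1 z1 c2 z2 c3 z3
    where P: "P1 = (a * c1, b * z1)" "P2 = (a * c2, b * z2)" "P3 = (a * c3, b * z3)"
      and unit: "c1\<^sup>2 + z1\<^sup>2 = 1" "c2\<^sup>2 + z2\<^sup>2 = 1" "c3\<^sup>2 + z3\<^sup>2 = 1"
    using on_ellipse_circle_coordsE[OF \<open>a \<noteq> 0\<close> \<open>b \<noteq> 0\<close>] on by metis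
  have "(c1, z1) \<noteq> (c2, z2)" "(c1, z1) \<noteq> (c3, z3)" "(c2, z2) \<noteq> (c3, z3)"
    using distinct unfolding P by auto
  moreover have "j * (a\<^sup>2 * (c1 - c2)\<^sup>2 + b\<^sup>2 * (z1 - z2)\<^sup>2) = (c1 * c2 + z1 * z2 - 1)\<^sup>2"
    "j * (a\<^sup>2 * (c1 - c3)\<^sup>2 + b\<^sup>2 * (z1 - z3)\<^sup>2) = (c1 * c3 + z1 * z3 - 1)\<^sup>2"
    "j * (a\<^sup>2 * (c2 - c3)\<^sup>2 + b\<^sup>2 * (z2 - z3)\<^sup>2) = (c2 * c3 + z2 * z3 - 1)\<^sup>2"
    using chord unfolding P coords by simp_all
  ultimately have rel:
    "(j * (a\<^sup>2 - b\<^sup>2) - 1) * c1 * c2 - (j * (a\<^sup>2 - b\<^sup>2) + 1) * z1 * z2 = j * (a\<^sup>2 + b\<^sup>2) - 1"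
    "(j * (a\<^sup>2 - b\<^sup>2) - 1) * c1 * c3 - (j * (a\<^sup>2 - b\<^sup>2) + 1) * z1 * z3 = j * (a\<^sup>2 + b\<^sup>2) - 1"
    "(j * (a\<^sup>2 - b\<^sup>2) - 1) * c2 * c3 - (j * (a\<^sup>2 - b\<^sup>2) + 1) * z2 * z3 = j * (a\<^sup>2 + b\<^sup>2) - 1"
    using unit unit_circle_chord_relation by metis+
  have closure: "(j * (a\<^sup>2 - b\<^sup>2))\<^sup>2 + 2 * (j * (a\<^sup>2 + b\<^sup>2) - 1) = 1"
    using unit_circle_triangle_closure[OF unit \<open>(c1, z1) \<noteq> (c2, z2)\<close> \<open>(c1, z1) \<noteq> (c3, z3)\<close>
      \<open>(c2, z2) \<noteq> (c3, z3)\<close> rel] .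
  have "a\<^sup>2 > b\<^sup>2" "b\<^sup>2 > 0" using assms(2,3) by (simp_all add: power_strict_mono)
  have "(2 * j / (norm (N P1))\<^sup>2 - 1) + (2 * j / (norm (N P2))\<^sup>2 - 1)
      + (2 * j / (norm (N P3))\<^sup>2 - 1) - 1 = j * (a\<^sup>2 + b\<^sup>2) - 1"
    unfolding P coords
    using unit_circle_cos_sum[OF \<open>a\<^sup>2 > b\<^sup>2\<close> \<open>b\<^sup>2 > 0\<close> unit rel closure] .
  also have "\<dots> = 2 * (sqrt ((a\<^sup>2)\<^sup>2 - a\<^sup>2 * b\<^sup>2 + (b\<^sup>2)\<^sup>2) - b\<^sup>2)
      * (a\<^sup>2 - sqrt ((a\<^sup>2)\<^sup>2 - a\<^sup>2 * b\<^sup>2 + (b\<^sup>2)\<^sup>2)) / (a\<^sup>2 - b\<^sup>2)\<^sup>2"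
    using closure_condition_ratio[OF \<open>a\<^sup>2 > b\<^sup>2\<close> \<open>b\<^sup>2 > 0\<close> \<open>j \<ge> 0\<close> closure] .
  finally show ?thesis by simp
qed

lemma billiard3_chord_relation:
  assumes "billiard3 a b P1 P2 P3"
  defines "J \<equiv> joachimsthal a b P1 P2"
  shows "J\<^sup>2 * (dist P1 P2)\<^sup>2 = (inner P2 (ellipse_normal a b P1) - 1)\<^sup>2"
    and "J\<^sup>2 * (dist P1 P3)\<^sup>2 = (inner P3 (ellipse_normal a b P1) - 1)\<^sup>2"
    and "J\<^sup>2 * (dist P2 P3)\<^sup>2 = (inner P3 (ellipse_normal a b P2) - 1)\<^sup>2"
proof -
  have "on_ellipse a b P1" "on_ellipse a b P2" and "\<not> collinear {P1, P2, P3}"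
    using assms(1) by (simp_all add: billiard3_def nondegenerate_triangle_def)
  moreover from this(3) have "P1 \<noteq> P2" "P1 \<noteq> P3" "P2 \<noteq> P3"
    by (auto simp: insert_commute)
  ultimately have "J * dist P1 P2 = inner P2 (ellipse_normal a b P1) - 1"
    "J * dist P1 P3 = inner P3 (ellipse_normal a b P1) - 1"
    "J * dist P2 P3 = inner P3 (ellipse_normal a b P2) - 1"
    using joachimsthal_mult_dist billiard3_joachimsthal[OF assms(1)] unfolding J_def by metis+
  then show "J\<^sup>2 * (dist P1 P2)\<^sup>2 = (inner P2 (ellipse_normal a b P1) - 1)\<^sup>2"
    and "J\<^sup>2 * (dist P1 P3)\<^sup>2 = (inner P3 (ellipse_normal a b P1) - 1)\<^sup>2"
    and "J\<^sup>2 * (dist P2 P3)\<^sup>2 = (inner P3 (ellipse_normal a b P2) - 1)\<^sup>2"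
    by (simp_all flip: power_mult_distrib)
qed

theorem theorem1:
  fixes a b :: real and P1 P2 P3 :: pt
  assumes "a > b" and "b > 0"
    and "billiard3 a b P1 P2 P3"
  shows "inradius P1 P2 P3 / circumradius P1 P2 P3 =
    2 * (sqrt (a^4 - a^2*b^2 + b^4) - b^2) * (a^2 - sqrt (a^4 - a^2*b^2 + b^4)) / (a^2 - b^2)^2"
proof -
  define J where "J = joachimsthal a b P1 P2"
  have nd: "\<not> collinear {P1, P2, P3}"
    and on: "on_ellipse a b P1" "on_ellipse a b P2" "on_ellipse a b P3"
    using assms(3) by (simp_all add: billiard3_def nondegenerate_triangle_def)
  then have distinct: "P1 \<noteq> P2" "P1 \<noteq> P3" "P2 \<noteq> P3"
    by (auto simp: insert_commute)
  have "inradius P1 P2 P3 / circumradius P1 P2 P3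
      = cos_angle P1 P2 P3 + cos_angle P2 P3 P1 + cos_angle P3 P1 P2 - 1"
    using inradius_div_circumradius[OF nd] .
  also have "\<dots> = (2 * J\<^sup>2 / (norm (ellipse_normal a b P1))\<^sup>2 - 1)
      + (2 * J\<^sup>2 / (norm (ellipse_normal a b P2))\<^sup>2 - 1)
      + (2 * J\<^sup>2 / (norm (ellipse_normal a b P3))\<^sup>2 - 1) - 1"
    unfolding billiard3_cos_angle[OF assms(3), folded J_def] ..
  also have "\<dots> = 2 * (sqrt (a^4 - a^2*b^2 + b^4) - b^2) * (a^2 - sqrt (a^4 - a^2*b^2 + b^4))
      / (a^2 - b^2)^2"
    using ellipse_triangle_cos_sum[OF assms(1,2) _ on distinct
        billiard3_chord_relation[OF assms(3), folded J_def]]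
    by simp
  finally show ?thesis .
qed

end
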